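(* Let $(X^t)_{t\ge1}$ be real random variables with $X^1>0$ deterministic, and let $a,t_0,C_1,C_2>0$ be constants with $a>1$ and $t_0\ge a$. Suppose that for every $t\ge1$, $$\mathbb E[\exp(X^{t+1})]\le\mathbb E\Big[\exp\Big(\Big(1-\frac{a}{t+t_0}\Big)X^t+\frac{C_1}{t+t_0}+\frac{C_2}{(t+t_0)^2}\Big)\Big].$$ Then for every $t\ge1$, $$\mathbb E[\exp(X^{t+1})]\le\exp\Big(\frac{(t_0+1)^aX^1}{(t+1+t_0)^a}+\frac{C_1}{a}+\frac{3C_2/(a-1)}{t+1+t_0}\Big).$$
   Context: All expectations are assumed to be finite (possibly $+\infty$ on the right-hand side of the hypothesis makes it vacuous). *)

theory Defs
  imports "HOL-Probability.Probability"
begin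

end

theory Submission
  imports Defs
begin

text \<open>
  Write \<open>s = t + t\<^sub>0\<close> and \<open>B(s) = (t\<^sub>0+1)\<^sup>a x\<^sub>1 / s\<^sup>a + C\<^sub>1/a + K/s\<close> with \<open>K = 3 C\<^sub>2/(a-1)\<close>.
  By convexity, \<open>exp (c z) \<le> 1 - c + c exp z\<close> for \<open>0 \<le> c \<le> 1\<close>; applied to \<open>z = X - B\<close> this turns
  \<open>E exp X \<le> exp B\<close> into \<open>E exp (c X + d) \<le> exp (c B + d)\<close>. Hence \<open>E exp X\<^sup>t \<le> exp B(t + t\<^sub>0)\<close> follows
  by induction once \<open>(1 - a/s) B(s) + C\<^sub>1/s + C\<^sub>2/s\<^sup>2 \<le> B(s+1)\<close>, which is checked term by term:
  \<open>1 - a/s \<le> (s/(s+1))\<^sup>a\<close> for the first, and \<open>C\<^sub>2 (s+1) \<le> K ((a-1) s + a)\<close> for the last.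
\<close>

lemma one_minus_div_mult_powr_le:
  fixes a s :: real
  assumes "0 \<le> a" "0 < s"
  shows "(1 - a / s) * (s + 1) powr a \<le> s powr a"
proof -
  have "ln (1 + 1 / s) \<le> 1 / s"
    using assms by (intro ln_add_one_self_le_self) simp
  moreover have "ln (s / (s + 1)) = - ln (1 + 1 / s)"
    using assms by (simp add: field_simps ln_div)
  ultimately have "- a / s \<le> a * ln (s / (s + 1))"
    using mult_left_mono[of "- 1 / s" "ln (s / (s + 1))" a] assms by simp
  have "1 - a / s \<le> exp (- a / s)"
    using exp_ge_add_one_self[of "- a / s"] by simp
  also have "\<dots> \<le> exp (a * ln (s / (s + 1)))"
    using \<open>- a / s \<le> a * ln (s / (s + 1))\<close> by simp
  also have "\<dots> = (s / (s + 1)) powr a"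
    using assms by (simp add: powr_def mult.commute)
  also have "\<dots> = s powr a / (s + 1) powr a"
    using assms by (simp add: powr_divide)
  finally show ?thesis
    using assms by (simp add: pos_le_divide_eq)
qed

lemma harmonic_term_recursion_le:
  fixes a s C :: real
  assumes "1 < a" "1 \<le> s" "0 \<le> C"
  shows "(1 - a / s) * (3 * C / (a - 1)) / s + C / s^2 \<le> (3 * C / (a - 1)) / (s + 1)"
proof -
  define K where "K = 3 * C / (a - 1)"
  have "K * (a - 1) = 3 * C" "0 \<le> K * a"
    using assms by (simp_all add: K_def)
  moreover have "K * ((a - 1) * s + a) = K * (a - 1) * s + K * a"
    by (simp add: algebra_simps)
  moreover have "C * (s + 1) \<le> C * (3 * s)"
    using assms by (intro mult_left_mono) auto
  ultimately have "(K * (s - a) + C) * (s + 1) \<le> K * s^2"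
    by (simp add: algebra_simps power2_eq_square)
  then have "(K * (s - a) + C) / s^2 \<le> K / (s + 1)"
    using assms by (simp add: field_simps)
  moreover have "(1 - a / s) * K / s + C / s^2 = (K * (s - a) + C) / s^2"
    using assms by (simp add: field_simps power2_eq_square)
  ultimately show ?thesis
    by (simp add: K_def)
qed

lemma moment_bound_recursion_le:
  fixes a s C1 C2 P :: real
  assumes "1 < a" "a < s" "0 \<le> C2" "0 \<le> P"
  shows "(1 - a / s) * (P / s powr a + C1 / a + (3 * C2 / (a - 1)) / s) + C1 / s + C2 / s^2
     \<le> P / (s + 1) powr a + C1 / a + (3 * C2 / (a - 1)) / (s + 1)"
proof -
  have "(1 - a / s) * (s + 1) powr a * P \<le> s powr a * P"
    using assms by (intro mult_right_mono one_minus_div_mult_powr_le) auto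
  then have "(1 - a / s) * (P / s powr a) \<le> P / (s + 1) powr a"
    using assms by (simp add: field_simps)
  moreover have "(1 - a / s) * (C1 / a) + C1 / s = C1 / a"
    using assms by (simp add: field_simps)
  moreover have "(1 - a / s) * ((3 * C2 / (a - 1)) / s) + C2 / s^2 \<le> (3 * C2 / (a - 1)) / (s + 1)"
    using harmonic_term_recursion_le[of a s C2] assms by simp
  ultimately show ?thesis
    by (simp add: distrib_left)
qed

lemma exp_mult_le_chord:
  fixes c z :: real
  assumes "0 \<le> c" "c \<le> 1"
  shows "exp (c * z) \<le> (1 - c) + c * exp z"
  using convex_onD[OF exp_convex, of c 0 z] assms by simp

lemma (in prob_space) nn_integral_exp_affine_le:
  assumes Y: "Y \<in> borel_measurable M" and "0 \<le> c" "c \<le> 1"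
    and moment: "(\<integral>\<^sup>+ \<omega>. ennreal (exp (Y \<omega>)) \<partial>M) \<le> ennreal (exp b)"
  shows "(\<integral>\<^sup>+ \<omega>. ennreal (exp (c * Y \<omega> + d)) \<partial>M) \<le> ennreal (exp (c * b + d))"
proof -
  define e where "e = exp (c * b + d)"
  have e: "0 \<le> e * (1 - c)" "0 \<le> e * c * exp (- b)" "0 \<le> e * c"
    using assms by (simp_all add: e_def)
  have pointwise: "exp (c * Y \<omega> + d) \<le> e * (1 - c) + e * c * exp (- b) * exp (Y \<omega>)" for \<omega>
  proof -
    have "exp (c * Y \<omega> + d) = e * exp (c * (Y \<omega> - b))"
      by (simp add: e_def mult_exp_exp algebra_simps)
    also have "\<dots> \<le> e * ((1 - c) + c * exp (Y \<omega> - b))"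
      using assms by (simp add: e_def exp_mult_le_chord)
    also have "\<dots> = e * (1 - c) + e * c * exp (- b) * exp (Y \<omega>)"
      using mult_exp_exp[of "- b" "Y \<omega>"] by (simp add: algebra_simps)
    finally show ?thesis .
  qed
  have "ennreal (exp (c * Y \<omega> + d))
      \<le> ennreal (e * (1 - c)) + ennreal (e * c * exp (- b)) * ennreal (exp (Y \<omega>))" for \<omega>
    using ennreal_leI[OF pointwise[of \<omega>]] e by (simp add: ennreal_mult)
  then have "(\<integral>\<^sup>+ \<omega>. ennreal (exp (c * Y \<omega> + d)) \<partial>M)
      \<le> (\<integral>\<^sup>+ \<omega>. ennreal (e * (1 - c)) + ennreal (e * c * exp (- b)) * ennreal (exp (Y \<omega>)) \<partial>M)"
    by (intro nn_integral_mono)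
  also have "\<dots> = ennreal (e * (1 - c)) + ennreal (e * c * exp (- b)) * (\<integral>\<^sup>+ \<omega>. ennreal (exp (Y \<omega>)) \<partial>M)"
    using Y by (subst nn_integral_add) (auto simp: nn_integral_cmult emeasure_space_1)
  also have "\<dots> \<le> ennreal (e * (1 - c)) + ennreal (e * c * exp (- b)) * ennreal (exp b)"
    using moment by (intro add_left_mono mult_left_mono) auto
  also have "\<dots> = ennreal (e * (1 - c)) + ennreal (e * c * exp (- b) * exp b)"
    by (metis e(2) ennreal_mult exp_ge_zero)
  also have "\<dots> = ennreal (e * (1 - c) + e * c)"
    using e by (simp add: mult.assoc mult_exp_exp)
  also have "\<dots> = ennreal e"
    by (simp add: algebra_simps)
  finally show ?thesis
    by (simp add: e_def)
qed

lemma (in prob_space) nn_integral_exp_le_by_recursion: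
  assumes meas: "\<And>t. 1 \<le> t \<Longrightarrow> X t \<in> borel_measurable M"
    and coeff: "\<And>t. 1 \<le> t \<Longrightarrow> 0 \<le> c t \<and> c t \<le> 1"
    and rec: "\<And>t. 1 \<le> t \<Longrightarrow> (\<integral>\<^sup>+ \<omega>. ennreal (exp (X (t + 1) \<omega>)) \<partial>M)
                 \<le> (\<integral>\<^sup>+ \<omega>. ennreal (exp (c t * X t \<omega> + d t)) \<partial>M)"
    and base: "(\<integral>\<^sup>+ \<omega>. ennreal (exp (X 1 \<omega>)) \<partial>M) \<le> ennreal (exp (B 1))"
    and bound_step: "\<And>t. 1 \<le> t \<Longrightarrow> c t * B t + d t \<le> B (t + 1)"
    and "1 \<le> (t::nat)"
  shows "(\<integral>\<^sup>+ \<omega>. ennreal (exp (X t \<omega>)) \<partial>M) \<le> ennreal (exp (B t))"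
  using \<open>1 \<le> t\<close>
proof (induction t rule: dec_induct)
  case base
  show ?case by (fact base)
next
  case (step t)
  have "(\<integral>\<^sup>+ \<omega>. ennreal (exp (X (t + 1) \<omega>)) \<partial>M)
      \<le> (\<integral>\<^sup>+ \<omega>. ennreal (exp (c t * X t \<omega> + d t)) \<partial>M)"
    using rec \<open>1 \<le> t\<close> .
  also have "\<dots> \<le> ennreal (exp (c t * B t + d t))"
    using meas coeff \<open>1 \<le> t\<close> step.IH by (intro nn_integral_exp_affine_le) auto
  also have "\<dots> \<le> ennreal (exp (B (t + 1)))"
    using bound_step \<open>1 \<le> t\<close> by (simp add: ennreal_leI)
  finally show ?case by simp
qed

theorem lemma8:
  fixes M :: "'s measure" and X :: "nat \<Rightarrow> 's \<Rightarrow> real"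
    and x1 a t0 C1 C2 :: real
  assumes "prob_space M"
    and meas: "\<And>t. t \<ge> 1 \<Longrightarrow> X t \<in> borel_measurable M"
    and det: "\<And>\<omega>. \<omega> \<in> space M \<Longrightarrow> X 1 \<omega> = x1"
    and "x1 > 0"
    and "a > 1" and "t0 \<ge> a" and "C1 > 0" and "C2 > 0"
    and rec: "\<And>t::nat. t \<ge> 1 \<Longrightarrow>
      (\<integral>\<^sup>+ \<omega>. ennreal (exp (X (t + 1) \<omega>)) \<partial>M)
        \<le> (\<integral>\<^sup>+ \<omega>. ennreal (exp ((1 - a / (real t + t0)) * X t \<omega>
              + C1 / (real t + t0) + C2 / (real t + t0)^2)) \<partial>M)"
  shows "\<And>t::nat. t \<ge> 1 \<Longrightarrow>
      (\<integral>\<^sup>+ \<omega>. ennreal (exp (X (t + 1) \<omega>)) \<partial>M)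
        \<le> ennreal (exp ((t0 + 1) powr a * x1 / (real t + 1 + t0) powr a
              + C1 / a + (3 * C2 / (a - 1)) / (real t + 1 + t0)))"
proof -
  interpret prob_space M by fact
  define B where "B t = (t0 + 1) powr a * x1 / (real t + t0) powr a + C1 / a
      + (3 * C2 / (a - 1)) / (real t + t0)" for t :: nat
  have "x1 \<le> B 1"
    using assms by (simp add: B_def add.commute)
  have "(\<integral>\<^sup>+ \<omega>. ennreal (exp (X 1 \<omega>)) \<partial>M) = ennreal (exp x1)"
    using det by (simp add: nn_integral_cong[of M _ "\<lambda>_. ennreal (exp x1)"] emeasure_space_1)
  also have "\<dots> \<le> ennreal (exp (B 1))"
    using \<open>x1 \<le> B 1\<close> by (simp add: ennreal_leI)
  finally have base: "(\<integral>\<^sup>+ \<omega>. ennreal (exp (X 1 \<omega>)) \<partial>M) \<le> ennreal (exp (B 1))" .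
  have step: "(1 - a / (real t + t0)) * B t + (C1 / (real t + t0) + C2 / (real t + t0)^2) \<le> B (t + 1)"
    if "1 \<le> t" for t
    using moment_bound_recursion_le[of a "real t + t0" C2 "(t0 + 1) powr a * x1" C1] that assms
    by (simp add: B_def add_ac)
  have coeff: "0 \<le> 1 - a / (real t + t0) \<and> 1 - a / (real t + t0) \<le> 1" if "1 \<le> t" for t
    using that assms by (simp add: field_simps)
  have rec_affine: "(\<integral>\<^sup>+ \<omega>. ennreal (exp (X (t + 1) \<omega>)) \<partial>M)
      \<le> (\<integral>\<^sup>+ \<omega>. ennreal (exp ((1 - a / (real t + t0)) * X t \<omega>
            + (C1 / (real t + t0) + C2 / (real t + t0)^2))) \<partial>M)" if "1 \<le> t" for t
    using rec[OF that] by (simp add: add.assoc)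
  fix t :: nat
  assume "t \<ge> 1"
  then show "(\<integral>\<^sup>+ \<omega>. ennreal (exp (X (t + 1) \<omega>)) \<partial>M)
        \<le> ennreal (exp ((t0 + 1) powr a * x1 / (real t + 1 + t0) powr a
              + C1 / a + (3 * C2 / (a - 1)) / (real t + 1 + t0)))"
    using nn_integral_exp_le_by_recursion[where X = X and B = B and t = "t + 1",
        OF meas coeff rec_affine base step]
    by (simp add: B_def add_ac)
qed

end
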